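(* Let $\mathcal{T}=\{T_1,\dots,T_m\}$ be a finite set of deterministic transactions, each running at site $\ell(T_j)$, such that every $T_j$ writes only objects $x$ with $\mathit{Loc}(x)=\ell(T_j)$. Let $\psi$ be a formula over database states and, for each $T_j$, let $\phi_{T_j}$ be a transaction such that $\mathit{Eval}(T_j,D)=\mathit{Eval}(\phi_{T_j},D)$ for every database $D$ satisfying $\psi$ (i.e. $\langle\psi,\phi_{T_1},\dots,\phi_{T_m}\rangle$ is a row of a symbolic table for $\mathcal{T}$). Assume that every object read by $\phi_{T_j}$ satisfies $\mathit{Loc}(x)=\ell(T_j)$, and that $\phi_{T_j}$ writes only objects local to $\ell(T_j)$. Let $\varphi_{\Gamma_1},\dots,\varphi_{\Gamma_K}$ be formulas such that each $\varphi_{\Gamma_i}$ has as free variables only objects $x$ with $\mathit{Loc}(x)=i$, and such that for every database $D'$, $\bigwedge_{1\le i\le K}\varphi_{\Gamma_i}(D')$ implies $\psi(D')$. Let $\varphi_\Gamma=\bigwedge_{1\le i\le K}\varphi_{\Gamma_i}$ and $\Gamma=\{D\mid D\models\varphi_\Gamma\}$. Then $\Gamma$ is a valid global treaty for $\mathcal{T}$.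
   Context: $\mathit{Obj}$ is a countably infinite set of objects; a database $D$ is a map from $\mathit{Obj}$ to the integers with finite support; objects are located at sites $\{1,\dots,K\}$ via $\mathit{Loc}:\mathit{Obj}\to\{1,\dots,K\}$. $\mathit{Eval}(T,D)=\langle D',G'\rangle$ gives the resulting database and printed log of deterministic transaction $T$ on $D$. For a transaction $T$, its local–remote partition marks exactly the objects at site $\ell(T)$ as local; a database is written $(l,r)$ with $l$ the local values and $r$ the remote values. Observational equivalence: $\langle (l,r),G\rangle\equiv\langle (l',r'),G'\rangle$ iff $l=l'$ and $G=G'$. An LR-slice for $T$ is a pair $(L,R)$ such that $\mathit{Eval}(T,(l,r))\equiv\mathit{Eval}(T,(l,r'))$ for all $l\in L$, $r,r'\in R$. A set $\Gamma$ of databases is a valid global treaty for a set of transactions if for every $T$ in the set, with $L=\{l\mid(l,r)\in\Gamma\}$ and $R=\{r\mid(l,r)\in\Gamma\}$ taken with respect to $T$'s local–remote partition, $(L,R)$ is an LR-slice for $T$. *)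

theory Defs
  imports Main "HOL-Library.Countable"
begin

definition is_db :: "('obj \<Rightarrow> int) \<Rightarrow> bool" where
  "is_db D \<longleftrightarrow> finite {x. D x \<noteq> 0}"

text \<open>Local part (values on the local object set S) and the database (l,r).\<close>
definition loc_part :: "'obj set \<Rightarrow> ('obj \<Rightarrow> int) \<Rightarrow> ('obj \<Rightarrow> int)" where
  "loc_part S D = (\<lambda>x. if x \<in> S then D x else 0)"

definition rem_part :: "'obj set \<Rightarrow> ('obj \<Rightarrow> int) \<Rightarrow> ('obj \<Rightarrow> int)" where
  "rem_part S D = (\<lambda>x. if x \<in> S then 0 else D x)"

definition combine :: "'obj set \<Rightarrow> ('obj \<Rightarrow> int) \<Rightarrow> ('obj \<Rightarrow> int) \<Rightarrow> ('obj \<Rightarrow> int)" where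
  "combine S l r = (\<lambda>x. if x \<in> S then l x else r x)"

definition obs_equiv :: "'obj set \<Rightarrow> ('obj \<Rightarrow> int) \<times> 'g \<Rightarrow> ('obj \<Rightarrow> int) \<times> 'g \<Rightarrow> bool" where
  "obs_equiv S a b \<longleftrightarrow> loc_part S (fst a) = loc_part S (fst b) \<and> snd a = snd b"

definition local_objs :: "('obj \<Rightarrow> nat) \<Rightarrow> nat \<Rightarrow> 'obj set" where
  "local_objs Loc i = {x. Loc x = i}"

definition LR_slice :: "(('obj \<Rightarrow> int) \<Rightarrow> ('obj \<Rightarrow> int) \<times> 'g) \<Rightarrow> 'obj set
    \<Rightarrow> ('obj \<Rightarrow> int) set \<Rightarrow> ('obj \<Rightarrow> int) set \<Rightarrow> bool" where
  "LR_slice ev S L R \<longleftrightarrow>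
     (\<forall>l\<in>L. \<forall>r\<in>R. \<forall>r'\<in>R. obs_equiv S (ev (combine S l r)) (ev (combine S l r')))"

definition valid_global_treaty ::
  "('tx \<Rightarrow> ('obj \<Rightarrow> int) \<Rightarrow> ('obj \<Rightarrow> int) \<times> 'g) \<Rightarrow> ('tx \<Rightarrow> nat) \<Rightarrow> ('obj \<Rightarrow> nat)
     \<Rightarrow> ('obj \<Rightarrow> int) set \<Rightarrow> 'tx set \<Rightarrow> bool" where
  "valid_global_treaty Eval ell Loc Gamma Ts \<longleftrightarrow>
     (\<forall>T\<in>Ts. LR_slice (Eval T) (local_objs Loc (ell T))
        (loc_part (local_objs Loc (ell T)) ` Gamma)
        (rem_part (local_objs Loc (ell T)) ` Gamma))"

definition writes_only :: "(('obj \<Rightarrow> int) \<Rightarrow> ('obj \<Rightarrow> int) \<times> 'g) \<Rightarrow> 'obj set \<Rightarrow> bool" where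
  "writes_only ev S \<longleftrightarrow> (\<forall>D. is_db D \<longrightarrow> (\<forall>x. x \<notin> S \<longrightarrow> fst (ev D) x = D x))"

definition reads_only :: "(('obj \<Rightarrow> int) \<Rightarrow> ('obj \<Rightarrow> int) \<times> 'g) \<Rightarrow> 'obj set \<Rightarrow> bool" where
  "reads_only ev S \<longleftrightarrow> (\<forall>D D'. is_db D \<longrightarrow> is_db D' \<longrightarrow> (\<forall>x\<in>S. D x = D' x) \<longrightarrow>
      snd (ev D) = snd (ev D') \<and> (\<forall>x\<in>S. fst (ev D) x = fst (ev D') x))"

text \<open>A formula has free variables only among S.\<close>
definition depends_only :: "(('obj \<Rightarrow> int) \<Rightarrow> bool) \<Rightarrow> 'obj set \<Rightarrow> bool" where
  "depends_only P S \<longleftrightarrow> (\<forall>D D'. (\<forall>x\<in>S. D x = D' x) \<longrightarrow> P D = P D')"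

end

theory Submission
  imports Defs
begin

text \<open>Gluing the local part of one database of \<open>\<Gamma>\<close> at site \<open>\<ell>(T)\<close> to the remote part of
  another yields again a database of \<open>\<Gamma>\<close>, because each conjunct \<open>\<phi>\<^sub>\<Gamma>\<^sub>i\<close> only sees site \<open>i\<close>,
  where the glued database coincides with one of the two. On \<open>\<Gamma>\<close> the transaction \<open>T\<close> behaves
  like \<open>\<phi>\<^sub>T\<close>, which reads only local objects, so varying the remote part changes neither the
  log nor the local result.\<close>

lemma combine_parts_apply:
  "combine S (loc_part S D) (rem_part S D') x = (if x \<in> S then D x else D' x)"
  by (simp add: combine_def loc_part_def rem_part_def)

lemma is_db_combine_parts:
  assumes "is_db D" and "is_db D'"
  shows "is_db (combine S (loc_part S D) (rem_part S D'))"
proof -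
  have "{x. combine S (loc_part S D) (rem_part S D') x \<noteq> 0} \<subseteq> {x. D x \<noteq> 0} \<union> {x. D' x \<noteq> 0}"
    by (auto simp: combine_parts_apply split: if_splits)
  with assms show ?thesis
    unfolding is_db_def by (meson finite_UnI finite_subset)
qed

lemma site_formulas_combine_parts:
  assumes dep: "\<forall>i\<in>I. depends_only (P i) (local_objs Loc i)"
    and D: "\<forall>i\<in>I. P i D" and D': "\<forall>i\<in>I. P i D'"
  shows "\<forall>i\<in>I. P i (combine (local_objs Loc j) (loc_part (local_objs Loc j) D)
                              (rem_part (local_objs Loc j) D'))"
proof
  fix i assume i: "i \<in> I"
  let ?C = "combine (local_objs Loc j) (loc_part (local_objs Loc j) D) (rem_part (local_objs Loc j) D')"
  show "P i ?C"
  proof (cases "i = j")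
    case True
    then have "\<forall>x\<in>local_objs Loc i. D x = ?C x"
      by (simp add: combine_parts_apply)
    then show ?thesis using dep D i unfolding depends_only_def by blast
  next
    case False
    then have "\<forall>x\<in>local_objs Loc i. D' x = ?C x"
      by (auto simp: combine_parts_apply local_objs_def)
    then show ?thesis using dep D' i unfolding depends_only_def by blast
  qed
qed

lemma LR_slice_if_equal_to_local_reader:
  assumes closed: "\<And>D D'. D \<in> G \<Longrightarrow> D' \<in> G \<Longrightarrow> combine S (loc_part S D) (rem_part S D') \<in> G"
    and db: "\<And>D. D \<in> G \<Longrightarrow> is_db D"
    and same: "\<And>D. D \<in> G \<Longrightarrow> ev D = ev' D"
    and reads: "reads_only ev' S"
  shows "LR_slice ev S (loc_part S ` G) (rem_part S ` G)"
  unfolding LR_slice_def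
proof (intro ballI)
  fix l r r' assume "l \<in> loc_part S ` G" "r \<in> rem_part S ` G" "r' \<in> rem_part S ` G"
  then obtain D1 D2 D3 where D: "D1 \<in> G" "D2 \<in> G" "D3 \<in> G"
    and lr: "l = loc_part S D1" "r = rem_part S D2" "r' = rem_part S D3"
    by blast
  have in_G: "combine S l r \<in> G" "combine S l r' \<in> G"
    using closed D lr by auto
  have "\<forall>x\<in>S. combine S l r x = combine S l r' x"
    by (simp add: combine_def)
  then have "snd (ev' (combine S l r)) = snd (ev' (combine S l r')) \<and>
      (\<forall>x\<in>S. fst (ev' (combine S l r)) x = fst (ev' (combine S l r')) x)"
    using reads db in_G unfolding reads_only_def by blast
  then show "obs_equiv S (ev (combine S l r)) (ev (combine S l r'))"
    using same in_G by (auto simp: obs_equiv_def loc_part_def)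
qed

theorem lemma4p1:
  fixes Eval :: "'tx \<Rightarrow> ('obj::countable \<Rightarrow> int) \<Rightarrow> ('obj \<Rightarrow> int) \<times> 'g"
    and ell :: "'tx \<Rightarrow> nat" and Loc :: "'obj \<Rightarrow> nat" and K :: nat
    and Ts :: "'tx set" and psi :: "('obj \<Rightarrow> int) \<Rightarrow> bool"
    and phi :: "'tx \<Rightarrow> 'tx" and phiG :: "nat \<Rightarrow> ('obj \<Rightarrow> int) \<Rightarrow> bool"
  assumes "infinite (UNIV :: 'obj set)"
    and "\<forall>x. Loc x \<in> {1..K}"
    and "finite Ts"
    and "\<forall>T\<in>Ts. ell T \<in> {1..K}"
    and "\<forall>T\<in>Ts. writes_only (Eval T) (local_objs Loc (ell T))"
    and "\<forall>T\<in>Ts. \<forall>D. is_db D \<longrightarrow> psi D \<longrightarrow> Eval T D = Eval (phi T) D"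
    and "\<forall>T\<in>Ts. reads_only (Eval (phi T)) (local_objs Loc (ell T))"
    and "\<forall>T\<in>Ts. writes_only (Eval (phi T)) (local_objs Loc (ell T))"
    and "\<forall>i\<in>{1..K}. depends_only (phiG i) (local_objs Loc i)"
    and "\<forall>D'. is_db D' \<longrightarrow> (\<forall>i\<in>{1..K}. phiG i D') \<longrightarrow> psi D'"
  shows "valid_global_treaty Eval ell Loc {D. is_db D \<and> (\<forall>i\<in>{1..K}. phiG i D)} Ts"
  unfolding valid_global_treaty_def
proof
  fix T assume T: "T \<in> Ts"
  let ?G = "{D. is_db D \<and> (\<forall>i\<in>{1..K}. phiG i D)}"
  let ?S = "local_objs Loc (ell T)"
  show "LR_slice (Eval T) ?S (loc_part ?S ` ?G) (rem_part ?S ` ?G)"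
  proof (rule LR_slice_if_equal_to_local_reader)
    show "combine ?S (loc_part ?S D) (rem_part ?S D') \<in> ?G" if "D \<in> ?G" "D' \<in> ?G" for D D'
      using that is_db_combine_parts site_formulas_combine_parts[OF assms(9)] by blast
    show "Eval T D = Eval (phi T) D" if "D \<in> ?G" for D
      using that T assms(6,10) by blast
    show "reads_only (Eval (phi T)) ?S"
      using T assms(7) by blast
  qed simp
qed

end
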